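(* Let $\boldsymbol{u}^\star\in\mathbb{R}^n\setminus\{\boldsymbol{0}\}$ and $f(\boldsymbol{u})=\frac12\|\boldsymbol{u}\boldsymbol{u}^{\mathrm T}-\boldsymbol{u}^\star{\boldsymbol{u}^\star}^{\mathrm T}\|_1$ on $\mathbb{R}^n$. Let $\boldsymbol{u}\ne\boldsymbol{0}$ be a spurious stationary point of $f$. Then $$\{\boldsymbol{w}\in\mathbb{R}^n:df(\boldsymbol{u})(\boldsymbol{w})=0\}=\prod_{j=1}^n C_j,\qquad C_j=\begin{cases}\operatorname{sgn}(u_j)\cdot\mathbb{R}_-, & j\in\operatorname{supp}(\boldsymbol{u}^\star),\ |u_j|=|u_j^\star|,\\ \mathbb{R}, & j\in\operatorname{supp}(\boldsymbol{u}^\star),\ |u_j|<|u_j^\star|,\\ \{0\}, & j\notin\operatorname{supp}(\boldsymbol{u}^\star).\end{cases}$$ Moreover, $\{\boldsymbol{w}:df(\boldsymbol{0})(\boldsymbol{w})=0\}=\mathbb{R}^n$.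
   Context: $\|\cdot\|_1$ is the entrywise $\ell_1$-norm. $\operatorname{supp}(\boldsymbol{x})=\{i:x_i\ne0\}$, $\mathbb{R}_-=\{x\le0\}$. $df(\boldsymbol{x})(\boldsymbol{w})=\lim_{t\searrow0}(f(\boldsymbol{x}+t\boldsymbol{w})-f(\boldsymbol{x}))/t$. A point $\boldsymbol{u}$ is stationary if $\boldsymbol{0}\in\partial f(\boldsymbol{u})$, where $\partial f(\boldsymbol{u})=\{\boldsymbol{Z}\boldsymbol{u}:\boldsymbol{Z}\text{ symmetric}, \boldsymbol{Z}\in\operatorname{Sign}(\boldsymbol{u}\boldsymbol{u}^{\mathrm T}-\boldsymbol{u}^\star{\boldsymbol{u}^\star}^{\mathrm T})\}$ (entrywise set-valued sign, $\operatorname{Sign}(0)=[-1,1]$) is the (Fréchet = limiting = Clarke) subdifferential; it is spurious if additionally $\boldsymbol{u}\notin\{\boldsymbol{u}^\star,-\boldsymbol{u}^\star\}$. *)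

theory Defs
  imports "HOL-Analysis.Analysis"
begin

definition obj :: "real^'n \<Rightarrow> real^'n \<Rightarrow> real" where
  "obj ustar u = (1/2) * (\<Sum>i\<in>UNIV. \<Sum>j\<in>UNIV. \<bar>u$i * u$j - ustar$i * ustar$j\<bar>)"

definition dirderiv :: "(real^'n \<Rightarrow> real) \<Rightarrow> real^'n \<Rightarrow> real^'n \<Rightarrow> real" where
  "dirderiv f x w = Lim (at_right 0) (\<lambda>t. (f (x + t *\<^sub>R w) - f x) / t)"

definition Sign :: "real \<Rightarrow> real set" where
  "Sign x = (if x = 0 then {-1..1} else {sgn x})"

definition subdiff :: "real^'n \<Rightarrow> real^'n \<Rightarrow> (real^'n) set" where
  "subdiff ustar u = {Z *v u | Z. transpose Z = Z \<and>
       (\<forall>i j. Z$i$j \<in> Sign (u$i * u$j - ustar$i * ustar$j))}"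

definition stationary :: "real^'n \<Rightarrow> real^'n \<Rightarrow> bool" where
  "stationary ustar u \<longleftrightarrow> 0 \<in> subdiff ustar u"

definition spurious_stationary :: "real^'n \<Rightarrow> real^'n \<Rightarrow> bool" where
  "spurious_stationary ustar u \<longleftrightarrow> stationary ustar u \<and> u \<noteq> ustar \<and> u \<noteq> - ustar"

end

(*
  Write s for u*. Stationarity of u means that some symmetric matrix Z with
  Z_ij in Sign(u_i u_j - s_i s_j) satisfies Z u = 0.

  Testing the resulting identity sum_ij Z_ij (u_i v_j + v_i u_j) = 0 with
  v_i = ln(u_i / s_i) u_i shows that a vector u with the sign pattern of s is
  stationary only if u = s: every term is nonnegative, and the diagonal ones
  are positive unless u_i = s_i.

  With sigma_k = sgn u_k * sgn s_k, every entry satisfies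
  Z_ij u_i u_j >= - sigma_i sigma_j |u_i u_j|, and the i-th row sum of the
  differences is |u_i| sigma_i K with K = sum_j sgn(s_j) u_j. If K were nonzero,
  all sigma_k would share its sign and u would be s or -s. So at a spurious
  point K = 0 and all these inequalities are equalities. In particular
  Z_kk = -1 on the support of u, which gives |u_k| <= |s_k|, and
  Z_ij = - sgn(u_i u_j) whenever u_i u_j = s_i s_j.

  The directional derivative in direction w is (1/2) sum_ij of the one-sided
  derivative of |.| at a_ij in direction b_ij, where a = u u^T - s s^T and
  b = u w^T + w u^T. Subtracting sum_ij Z_ij b_ij = 0 turns it into a sum of
  nonnegative terms. It therefore vanishes iff Z_ij b_ij = |b_ij| wherever
  a_ij = 0, and the structure of Z translates this into the coordinatewise
  description of the cone.
*)

theory Submission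
  imports Defs
begin

definition abs_dirderiv :: "real \<Rightarrow> real \<Rightarrow> real" where
  "abs_dirderiv a b = (if a = 0 then \<bar>b\<bar> else sgn a * b)"

lemma tendsto_abs_quadratic_difference_quotient:
  fixes a b c :: real
  shows "((\<lambda>t. (\<bar>a + t * b + t\<^sup>2 * c\<bar> - \<bar>a\<bar>) / t) \<longlongrightarrow> abs_dirderiv a b) (at_right 0)"
proof -
  define h where "h t = (if a = 0 then \<bar>b + t * c\<bar> else sgn a * (b + t * c))" for t :: real
  have "(h \<longlongrightarrow> h 0) (at_right 0)"
    unfolding h_def by (cases "a = 0") (auto intro!: tendsto_eq_intros)
  moreover have "h 0 = abs_dirderiv a b"
    by (simp add: h_def abs_dirderiv_def)
  moreover have "\<forall>\<^sub>F t in at_right 0. h t = (\<bar>a + t * b + t\<^sup>2 * c\<bar> - \<bar>a\<bar>) / t"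
  proof -
    have "((\<lambda>t. sgn a * (a + t * b + t\<^sup>2 * c)) \<longlongrightarrow> sgn a * a) (at_right (0::real))"
      by (auto intro!: tendsto_eq_intros)
    moreover have "a \<noteq> 0 \<Longrightarrow> 0 < sgn a * a"
      by (simp add: sgn_if)
    ultimately have "\<forall>\<^sub>F t in at_right 0. a \<noteq> 0 \<longrightarrow> sgn a * (a + t * b + t\<^sup>2 * c) > 0"
      by (cases "a = 0") (auto dest: order_tendstoD(1))
    moreover have "\<forall>\<^sub>F t in at_right (0::real). t > 0"
      by (simp add: eventually_at_right_less)
    ultimately show ?thesis
    proof eventually_elim
      case (elim t)
      have factor: "a + t * b + t\<^sup>2 * c = a + t * (b + t * c)"
        by (simp add: power2_eq_square algebra_simps)
      have "\<bar>a + t * b + t\<^sup>2 * c\<bar> - \<bar>a\<bar> = t * h t"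
      proof (cases "a = 0")
        case True
        with \<open>t > 0\<close> show ?thesis
          unfolding factor by (simp add: h_def abs_mult)
      next
        case False
        have "\<bar>y\<bar> = sgn a * y" if "sgn a * y > 0" for y
          using that by (auto simp: sgn_if)
        with False elim have "\<bar>a + t * b + t\<^sup>2 * c\<bar> = sgn a * (a + t * (b + t * c))"
          unfolding factor by simp
        moreover have "\<bar>a\<bar> = sgn a * a"
          by (simp add: abs_if sgn_if)
        ultimately show ?thesis
          using False by (simp add: h_def algebra_simps)
      qed
      with elim show ?case
        by simp
    qed
  qed
  ultimately show ?thesis
    by (simp add: tendsto_cong)
qed

lemma Sign_abs_le_1: "z \<in> Sign x \<Longrightarrow> \<bar>z\<bar> \<le> 1"
  by (auto simp: Sign_def sgn_if split: if_splits)

lemma Sign_mult_le_abs: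
  assumes "z \<in> Sign x"
  shows "z * y \<le> \<bar>y\<bar>"
proof -
  from assms have "\<bar>z\<bar> * \<bar>y\<bar> \<le> \<bar>y\<bar>"
    using Sign_abs_le_1 by (simp add: mult_left_le_one_le)
  then show ?thesis
    by (metis abs_ge_self abs_mult order_trans)
qed

lemma Sign_mult_eq_abs:
  assumes "z \<in> Sign x" "sgn y = sgn x"
  shows "z * y = \<bar>y\<bar>"
proof (cases "x = 0")
  case False
  with assms have "z = sgn y"
    by (simp add: Sign_def)
  then show ?thesis
    by (simp add: abs_if sgn_if)
qed (use assms in \<open>simp add: sgn_0_0\<close>)

lemma Sign_mult_add_sgn_nonneg:
  fixes z p q :: real
  assumes "z \<in> Sign (p - q)"
  shows "0 \<le> z * p + sgn p * sgn q * \<bar>p\<bar>"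
proof (cases "sgn p * sgn q = 1")
  case True
  then show ?thesis
    using Sign_mult_le_abs[OF assms, of "- p"] by simp
next
  case False
  show ?thesis
  proof (cases "p = 0")
    case False
    with \<open>sgn p * sgn q \<noteq> 1\<close> have "sgn p * sgn q \<in> {0, -1}" "sgn (p - q) = sgn p"
      by (cases "p > 0"; cases "q > 0"; cases "q = 0"; simp add: sgn_if)+
    then show ?thesis
      using Sign_mult_eq_abs[OF assms, of p] by auto
  qed simp
qed

lemma abs_dirderiv_ge_Sign_mult: "z \<in> Sign a \<Longrightarrow> z * b \<le> abs_dirderiv a b"
  using Sign_mult_le_abs by (auto simp: abs_dirderiv_def Sign_def)

lemma abs_dirderiv_eq_Sign_mult_iff:
  "z \<in> Sign a \<Longrightarrow> abs_dirderiv a b = z * b \<longleftrightarrow> (a = 0 \<longrightarrow> z * b = \<bar>b\<bar>)"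
  by (auto simp: abs_dirderiv_def Sign_def)

lemma sgn_ln:
  fixes x :: real
  shows "0 < x \<Longrightarrow> sgn (ln x) = sgn (x - 1)"
  by (cases x "1::real" rule: linorder_cases) auto

lemma mem_sgn_ray_iff:
  fixes x y :: real
  assumes "x \<noteq> 0"
  shows "y \<in> {sgn x * t | t. t \<le> 0} \<longleftrightarrow> sgn x * y \<le> 0"
proof -
  have y: "y = sgn x * (sgn x * y)"
    using assms by (simp add: sgn_if)
  show ?thesis
  proof
    assume "y \<in> {sgn x * t | t. t \<le> 0}"
    then obtain t where "y = sgn x * t" "t \<le> 0"
      by blast
    then show "sgn x * y \<le> 0"
      using assms by (simp add: sgn_if)
  next
    assume "sgn x * y \<le> 0"
    with y show "y \<in> {sgn x * t | t. t \<le> 0}"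
      by blast
  qed
qed

lemma neg_sgn_mult_eq_abs_iff:
  fixes x y :: real
  shows "x \<noteq> 0 \<Longrightarrow> - sgn x * y = \<bar>y\<bar> \<longleftrightarrow> sgn x * y \<le> 0"
  by (auto simp: sgn_if abs_if)

lemma sum_sum_nonneg_eq_0_iff:
  fixes f :: "'a \<Rightarrow> 'b \<Rightarrow> 'c::ordered_comm_monoid_add"
  assumes "finite A" "finite B" "\<And>i j. i \<in> A \<Longrightarrow> j \<in> B \<Longrightarrow> 0 \<le> f i j"
  shows "(\<Sum>i\<in>A. \<Sum>j\<in>B. f i j) = 0 \<longleftrightarrow> (\<forall>i\<in>A. \<forall>j\<in>B. f i j = 0)"
  using assms by (simp add: sum_nonneg_eq_0_iff sum_nonneg)

lemma dirderiv_obj: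
  fixes s x w :: "real^'n"
  shows "dirderiv (obj s) x w =
    (1/2) * (\<Sum>i\<in>UNIV. \<Sum>j\<in>UNIV. abs_dirderiv (x$i * x$j - s$i * s$j) (x$i * w$j + w$i * x$j))"
proof -
  define a where "a i j = x$i * x$j - s$i * s$j" for i j
  define b where "b i j = x$i * w$j + w$i * x$j" for i j
  define c where "c i j = w$i * w$j" for i j
  define q where "q t i j = (\<bar>a i j + t * b i j + t\<^sup>2 * c i j\<bar> - \<bar>a i j\<bar>) / t" for t i j
  have diff: "obj s (x + t *\<^sub>R w) - obj s x =
      (1/2) * (\<Sum>i\<in>UNIV. \<Sum>j\<in>UNIV. \<bar>a i j + t * b i j + t\<^sup>2 * c i j\<bar> - \<bar>a i j\<bar>)" for t
    unfolding obj_def a_def b_def c_def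
    by (simp add: sum_subtractf power2_eq_square algebra_simps)
  have quotient: "(\<lambda>t. (obj s (x + t *\<^sub>R w) - obj s x) / t) =
      (\<lambda>t. (1/2) * (\<Sum>i\<in>UNIV. \<Sum>j\<in>UNIV. q t i j))"
    unfolding diff q_def by (simp add: sum_divide_distrib mult.commute)
  have "((\<lambda>t. (1/2) * (\<Sum>i\<in>UNIV. \<Sum>j\<in>UNIV. q t i j))
      \<longlongrightarrow> (1/2) * (\<Sum>i\<in>UNIV. \<Sum>j\<in>UNIV. abs_dirderiv (a i j) (b i j))) (at_right 0)"
    unfolding q_def
    by (intro tendsto_mult_left tendsto_sum tendsto_abs_quadratic_difference_quotient)
  then have "dirderiv (obj s) x w = (1/2) * (\<Sum>i\<in>UNIV. \<Sum>j\<in>UNIV. abs_dirderiv (a i j) (b i j))"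
    unfolding dirderiv_def quotient by (intro tendsto_Lim) simp_all
  then show ?thesis
    by (simp add: a_def b_def)
qed

lemma dirderiv_obj_at_0: "dirderiv (obj s) 0 w = 0"
proof -
  have "abs_dirderiv a 0 = 0" for a
    by (simp add: abs_dirderiv_def)
  then show ?thesis
    by (simp add: dirderiv_obj)
qed

definition critical_cone :: "real^'n \<Rightarrow> real^'n \<Rightarrow> (real^'n) set" where
  "critical_cone s u = {w. \<forall>j.
    (s$j \<noteq> 0 \<and> \<bar>u$j\<bar> = \<bar>s$j\<bar> \<longrightarrow> w$j \<in> {sgn (u$j) * x | x. x \<le> 0}) \<and>
    (s$j = 0 \<longrightarrow> w$j = 0)}"

locale stationarity_certificate =
  fixes s u :: "real^'n" and Z :: "real^'n^'n"
  assumes symmetric: "Z$i$j = Z$j$i"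
    and entry_in_Sign: "Z$i$j \<in> Sign (u$i * u$j - s$i * s$j)"
    and row_orthogonal: "(\<Sum>j\<in>UNIV. Z$i$j * u$j) = 0"

lemma stationary_obtains_certificate:
  assumes "stationary s u"
  obtains Z where "stationarity_certificate s u Z"
proof -
  from assms obtain Z where "transpose Z = Z" "\<forall>i j. Z$i$j \<in> Sign (u$i * u$j - s$i * s$j)"
      "Z *v u = 0"
    unfolding stationary_def subdiff_def by auto
  then have "stationarity_certificate s u Z"
    by unfold_locales (auto simp: vec_eq_iff transpose_def matrix_vector_mult_def)
  then show thesis ..
qed

context stationarity_certificate
begin

lemma certificate_uminus: "stationarity_certificate s (- u) Z"
  by unfold_locales (use symmetric entry_in_Sign row_orthogonal in \<open>auto simp: sum_negf\<close>)

lemma bilinear_form_vanishes: "(\<Sum>i\<in>UNIV. \<Sum>j\<in>UNIV. Z$i$j * (u$i * v$j + v$i * u$j)) = 0"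
proof -
  have "(\<Sum>j\<in>UNIV. Z$i$j * (v$i * u$j)) = v$i * (\<Sum>j\<in>UNIV. Z$i$j * u$j)" for i
    by (simp add: sum_distrib_left algebra_simps)
  then have row: "(\<Sum>j\<in>UNIV. Z$i$j * (v$i * u$j)) = 0" for i
    by (simp add: row_orthogonal)
  have "(\<Sum>i\<in>UNIV. \<Sum>j\<in>UNIV. Z$i$j * (u$i * v$j)) = (\<Sum>j\<in>UNIV. \<Sum>i\<in>UNIV. Z$j$i * (v$j * u$i))"
    by (subst sum.swap) (simp add: symmetric mult.commute)
  with row show ?thesis
    by (simp add: distrib_left sum.distrib)
qed

lemma aligned_row_scalar_eq_0:
  assumes "\<And>j. Z$k$j * (c * u$j) = \<bar>c * u$j\<bar>"
  shows "c = 0 \<or> u = 0"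
proof -
  have "(\<Sum>j\<in>UNIV. \<bar>c * u$j\<bar>) = c * (\<Sum>j\<in>UNIV. Z$k$j * u$j)"
    by (simp add: assms[symmetric] sum_distrib_left algebra_simps)
  then have "\<forall>j. c * u$j = 0"
    using row_orthogonal by (simp add: sum_nonneg_eq_0_iff)
  then show ?thesis
    by (auto simp: vec_eq_iff)
qed

lemma target_zero_imp_zero:
  assumes "s$k = 0"
  shows "u$k = 0"
proof -
  have "Z$k$j * (u$k * u$j) = \<bar>u$k * u$j\<bar>" for j
    using assms by (intro Sign_mult_eq_abs[OF entry_in_Sign]) simp
  then have "u$k = 0 \<or> u = 0"
    by (rule aligned_row_scalar_eq_0)
  then show ?thesis
    by auto
qed

lemma eq_target_if_sgn_eq:
  assumes sgn_eq: "\<And>k. s$k \<noteq> 0 \<Longrightarrow> sgn (u$k) = sgn (s$k)"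
  shows "u = s"
proof -
  define r where "r k = u$k / s$k" for k
  have r_pos: "0 < r k" and u_eq: "u$k = r k * s$k" if "s$k \<noteq> 0" for k
    using sgn_eq[OF that] that by (auto simp: r_def sgn_if zero_less_divide_iff split: if_splits)
  define y where "y i j = (ln (r i) + ln (r j)) * (u$i * u$j)" for i j
  have aligned: "Z$i$j * y i j = \<bar>y i j\<bar>" for i j
  proof (cases "u$i * u$j = 0")
    case False
    then have "s$i \<noteq> 0" "s$j \<noteq> 0"
      using target_zero_imp_zero by auto
    define R where "R = r i * r j"
    with r_pos u_eq \<open>s$i \<noteq> 0\<close> \<open>s$j \<noteq> 0\<close> have "0 < R" "y i j = ln R * R * (s$i * s$j)"
        "u$i * u$j - s$i * s$j = (R - 1) * (s$i * s$j)"
      by (simp_all add: y_def ln_mult algebra_simps)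
    then have "sgn (y i j) = sgn (u$i * u$j - s$i * s$j)"
      by (simp add: sgn_mult sgn_ln)
    then show ?thesis
      by (rule Sign_mult_eq_abs[OF entry_in_Sign])
  qed (auto simp: y_def)
  have "(\<Sum>i\<in>UNIV. \<Sum>j\<in>UNIV. Z$i$j * y i j) = 0"
    using bilinear_form_vanishes[of "\<chi> k. ln (r k) * u$k"] by (simp add: y_def algebra_simps)
  then have diagonal: "y k k = 0" for k
    using sum_sum_nonneg_eq_0_iff[of UNIV UNIV "\<lambda>i j. \<bar>y i j\<bar>"] by (simp add: aligned)
  show "u = s"
    unfolding vec_eq_iff
  proof
    fix k
    show "u$k = s$k"
    proof (cases "s$k = 0")
      case False
      then have "u$k \<noteq> 0"
        using sgn_eq[OF False] by (auto simp: sgn_0_0)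
      with diagonal[of k] have "ln (r k) = 0"
        by (simp add: y_def)
      with r_pos[OF False] u_eq[OF False] show ?thesis
        by simp
    qed (simp add: target_zero_imp_zero)
  qed
qed

lemma row_sum_sign_pattern:
  "(\<Sum>j\<in>UNIV. Z$i$j * (u$i * u$j) + sgn (u$i * u$j) * sgn (s$i * s$j) * \<bar>u$i * u$j\<bar>) =
    \<bar>u$i\<bar> * (sgn (u$i) * sgn (s$i) * (\<Sum>j\<in>UNIV. sgn (s$j) * u$j))"
proof -
  have "(\<Sum>j\<in>UNIV. Z$i$j * (u$i * u$j)) = u$i * (\<Sum>j\<in>UNIV. Z$i$j * u$j)"
    by (simp add: sum_distrib_left algebra_simps)
  moreover have "sgn (u$i * u$j) * sgn (s$i * s$j) * \<bar>u$i * u$j\<bar> =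
      \<bar>u$i\<bar> * (sgn (u$i) * sgn (s$i) * (sgn (s$j) * u$j))" for j
    by (simp add: sgn_mult abs_mult algebra_simps) (simp add: abs_if sgn_if)
  ultimately show ?thesis
    by (simp add: sum.distrib row_orthogonal sum_distrib_left)
qed

lemma sign_pattern_term_nonneg:
  "0 \<le> Z$i$j * (u$i * u$j) + sgn (u$i * u$j) * sgn (s$i * s$j) * \<bar>u$i * u$j\<bar>"
  by (rule Sign_mult_add_sgn_nonneg[OF entry_in_Sign])

lemma sign_pattern_mult_sum_nonneg:
  "0 \<le> sgn (u$i) * sgn (s$i) * (\<Sum>j\<in>UNIV. sgn (s$j) * u$j)"
proof (cases "u$i = 0")
  case False
  have "0 \<le> \<bar>u$i\<bar> * (sgn (u$i) * sgn (s$i) * (\<Sum>j\<in>UNIV. sgn (s$j) * u$j))"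
    unfolding row_sum_sign_pattern[symmetric] by (intro sum_nonneg sign_pattern_term_nonneg)
  with False show ?thesis
    by (simp add: zero_le_mult_iff)
qed simp

lemma nonzero_if_sum_sgn_target_mult_ne_0:
  assumes K: "(\<Sum>j\<in>UNIV. sgn (s$j) * u$j) \<noteq> 0" and "s$k \<noteq> 0"
  shows "u$k \<noteq> 0"
proof
  assume "u$k = 0"
  have "Z$k$i * u$i * s$k = - \<bar>s$k\<bar> * (sgn (s$i) * u$i)" for i
  proof (cases "u$i = 0")
    case False
    then have "s$i \<noteq> 0"
      using target_zero_imp_zero by auto
    with \<open>u$k = 0\<close> \<open>s$k \<noteq> 0\<close> have "Z$k$i = - (sgn (s$k) * sgn (s$i))"
      using entry_in_Sign[of k i] by (simp add: Sign_def sgn_mult)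
    then show ?thesis
      by (simp add: abs_if sgn_if)
  qed simp
  then have "s$k * (\<Sum>i\<in>UNIV. Z$k$i * u$i) = - \<bar>s$k\<bar> * (\<Sum>i\<in>UNIV. sgn (s$i) * u$i)"
    by (simp add: sum_distrib_left sum_distrib_right algebra_simps)
  with K \<open>s$k \<noteq> 0\<close> show False
    by (simp add: row_orthogonal)
qed

lemma dirderiv_obj_eq_0_iff:
  "dirderiv (obj s) u w = 0 \<longleftrightarrow>
    (\<forall>i j. u$i * u$j = s$i * s$j \<longrightarrow>
      Z$i$j * (u$i * w$j + w$i * u$j) = \<bar>u$i * w$j + w$i * u$j\<bar>)"
proof -
  define a where "a i j = u$i * u$j - s$i * s$j" for i j
  define b where "b i j = u$i * w$j + w$i * u$j" for i j
  define g where "g i j = abs_dirderiv (a i j) (b i j) - Z$i$j * b i j" for i j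
  have "dirderiv (obj s) u w = (1/2) * (\<Sum>i\<in>UNIV. \<Sum>j\<in>UNIV. g i j)"
    using bilinear_form_vanishes[of w]
    by (simp add: dirderiv_obj g_def a_def b_def sum_subtractf)
  moreover have "0 \<le> g i j" for i j
    using abs_dirderiv_ge_Sign_mult[OF entry_in_Sign] by (simp add: g_def a_def)
  moreover have "g i j = 0 \<longleftrightarrow> (a i j = 0 \<longrightarrow> Z$i$j * b i j = \<bar>b i j\<bar>)" for i j
    using abs_dirderiv_eq_Sign_mult_iff[OF entry_in_Sign] by (simp add: g_def a_def)
  ultimately show ?thesis
    using sum_sum_nonneg_eq_0_iff[of UNIV UNIV g] by (auto simp: a_def b_def)
qed

end

locale spurious_certificate = stationarity_certificate +
  assumes ne_target: "u \<noteq> s" and ne_neg_target: "u \<noteq> - s"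
begin

lemma sum_sgn_target_mult_eq_0: "(\<Sum>j\<in>UNIV. sgn (s$j) * u$j) = 0"
proof (rule ccontr)
  define K where "K = (\<Sum>j\<in>UNIV. sgn (s$j) * u$j)"
  assume "(\<Sum>j\<in>UNIV. sgn (s$j) * u$j) \<noteq> 0"
  then have "K \<noteq> 0"
    by (simp add: K_def)
  have sgn_eq: "sgn (u$k) = sgn K * sgn (s$k)" if "s$k \<noteq> 0" for k
  proof -
    have "u$k \<noteq> 0"
      using nonzero_if_sum_sgn_target_mult_ne_0 \<open>K \<noteq> 0\<close> that by (simp add: K_def)
    moreover have "0 \<le> sgn (u$k) * sgn (s$k) * K"
      using sign_pattern_mult_sum_nonneg by (simp add: K_def)
    ultimately show ?thesis
      using that \<open>K \<noteq> 0\<close> by (auto simp: sgn_if zero_le_mult_iff split: if_splits)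
  qed
  show False
  proof (cases "K > 0")
    case True
    then have "u = s"
      using sgn_eq by (intro eq_target_if_sgn_eq) simp
    with ne_target show False ..
  next
    case False
    with \<open>K \<noteq> 0\<close> have "- u = s"
      using sgn_eq by (intro stationarity_certificate.eq_target_if_sgn_eq[OF certificate_uminus]) simp
    with ne_neg_target show False
      by auto
  qed
qed

lemma entry_mult_eq_neg_sign_pattern:
  "Z$i$j * (u$i * u$j) = - (sgn (u$i * u$j) * sgn (s$i * s$j) * \<bar>u$i * u$j\<bar>)"
proof -
  have "(\<Sum>j\<in>UNIV. Z$i$j * (u$i * u$j) + sgn (u$i * u$j) * sgn (s$i * s$j) * \<bar>u$i * u$j\<bar>) = 0"
    by (simp add: row_sum_sign_pattern sum_sgn_target_mult_eq_0)
  then have "Z$i$j * (u$i * u$j) + sgn (u$i * u$j) * sgn (s$i * s$j) * \<bar>u$i * u$j\<bar> = 0"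
    using sign_pattern_term_nonneg by (simp add: sum_nonneg_eq_0_iff)
  then show ?thesis
    by linarith
qed

lemma entry_eq_neg_sgn:
  assumes "u$i * u$j = s$i * s$j" "u$i * u$j \<noteq> 0"
  shows "Z$i$j = - sgn (u$i * u$j)"
proof -
  have "Z$i$j * (u$i * u$j) = - sgn (u$i * u$j) * (u$i * u$j)"
    using entry_mult_eq_neg_sign_pattern[of i j] assms by (simp add: abs_if sgn_if)
  with assms(2) show ?thesis
    by (metis mult_right_cancel)
qed

lemma abs_le_abs_target: "\<bar>u$k\<bar> \<le> \<bar>s$k\<bar>"
proof (cases "u$k = 0")
  case False
  then have "s$k \<noteq> 0"
    using target_zero_imp_zero by auto
  with False have "Z$k$k * (u$k * u$k) = -1 * (u$k * u$k)"
    using entry_mult_eq_neg_sign_pattern[of k k] by (simp add: sgn_mult)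
  moreover have "u$k * u$k \<noteq> 0"
    using False by simp
  ultimately have "Z$k$k = -1"
    by (metis mult_right_cancel)
  then have "\<not> 0 < u$k * u$k - s$k * s$k"
    using entry_in_Sign[of k k] by (auto simp: Sign_def)
  then show ?thesis
    by (simp add: abs_le_square_iff power2_eq_square)
qed simp

lemma abs_eq_abs_target_if_mult_eq:
  assumes "u$i * u$j = s$i * s$j" "s$i \<noteq> 0" "s$j \<noteq> 0"
  shows "\<bar>u$i\<bar> = \<bar>s$i\<bar>"
proof (rule ccontr)
  assume "\<bar>u$i\<bar> \<noteq> \<bar>s$i\<bar>"
  moreover have "u$j \<noteq> 0"
    using assms by auto
  ultimately have "\<bar>u$i\<bar> * \<bar>u$j\<bar> < \<bar>s$i\<bar> * \<bar>s$j\<bar>"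
    using abs_le_abs_target[of i] abs_le_abs_target[of j] by (intro mult_less_le_imp_less) auto
  with assms(1) show False
    by (simp add: abs_mult[symmetric])
qed

lemma tight_pair_aligned_iff:
  assumes "u$i * u$j = s$i * s$j" "s$i \<noteq> 0" "s$j \<noteq> 0"
  shows "Z$i$j * (u$i * w$j + w$i * u$j) = \<bar>u$i * w$j + w$i * u$j\<bar> \<longleftrightarrow>
    \<bar>u$i\<bar> * (sgn (u$j) * w$j) + \<bar>u$j\<bar> * (sgn (u$i) * w$i) \<le> 0"
proof -
  have "u$i * u$j \<noteq> 0"
    using assms by simp
  then have "Z$i$j * (u$i * w$j + w$i * u$j) = \<bar>u$i * w$j + w$i * u$j\<bar> \<longleftrightarrow>
      sgn (u$i * u$j) * (u$i * w$j + w$i * u$j) \<le> 0"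
    using entry_eq_neg_sgn[OF assms(1)] neg_sgn_mult_eq_abs_iff by simp
  moreover have "sgn (u$i * u$j) * (u$i * w$j + w$i * u$j) =
      \<bar>u$i\<bar> * (sgn (u$j) * w$j) + \<bar>u$j\<bar> * (sgn (u$i) * w$i)"
    by (simp add: sgn_mult algebra_simps) (simp add: abs_if sgn_if)
  ultimately show ?thesis
    by simp
qed

lemma aligned_imp_mem_critical_cone:
  assumes "u \<noteq> 0"
    and aligned: "\<And>i j. u$i * u$j = s$i * s$j \<Longrightarrow>
      Z$i$j * (u$i * w$j + w$i * u$j) = \<bar>u$i * w$j + w$i * u$j\<bar>"
  shows "w \<in> critical_cone s u"
  unfolding critical_cone_def
proof (rule CollectI, intro allI conjI impI)
  fix j
  assume tight: "s$j \<noteq> 0 \<and> \<bar>u$j\<bar> = \<bar>s$j\<bar>"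
  then have "s$j \<noteq> 0" "u$j \<noteq> 0"
    by auto
  from tight have "u$j * u$j = s$j * s$j"
    by (metis abs_mult_self_eq)
  with aligned have "Z$j$j * (u$j * w$j + w$j * u$j) = \<bar>u$j * w$j + w$j * u$j\<bar>"
    by blast
  with \<open>u$j * u$j = s$j * s$j\<close> \<open>s$j \<noteq> 0\<close>
  have "\<bar>u$j\<bar> * (sgn (u$j) * w$j) + \<bar>u$j\<bar> * (sgn (u$j) * w$j) \<le> 0"
    using tight_pair_aligned_iff by blast
  with \<open>u$j \<noteq> 0\<close> have "sgn (u$j) * w$j \<le> 0"
    by (smt (verit) mult_le_0_iff zero_less_abs_iff)
  with \<open>u$j \<noteq> 0\<close> show "w$j \<in> {sgn (u$j) * x | x. x \<le> 0}"
    using mem_sgn_ray_iff by blast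
next
  fix j
  assume "s$j = 0"
  then have "u$j = 0"
    by (rule target_zero_imp_zero)
  with \<open>s$j = 0\<close> have "Z$j$i * (w$j * u$i) = \<bar>w$j * u$i\<bar>" for i
    using aligned[of j i] by simp
  then show "w$j = 0"
    using aligned_row_scalar_eq_0 \<open>u \<noteq> 0\<close> by blast
qed

lemma mem_critical_cone_imp_aligned:
  assumes "w \<in> critical_cone s u" and prod: "u$i * u$j = s$i * s$j"
  shows "Z$i$j * (u$i * w$j + w$i * u$j) = \<bar>u$i * w$j + w$i * u$j\<bar>"
proof (cases "s$i = 0 \<or> s$j = 0")
  case True
  then show ?thesis
    using assms(1) target_zero_imp_zero by (auto simp: critical_cone_def)
next
  case False
  have ray: "sgn (u$k) * w$k \<le> 0" if "s$k \<noteq> 0" "\<bar>u$k\<bar> = \<bar>s$k\<bar>" for k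
    using assms(1) that mem_sgn_ray_iff[of "u$k" "w$k"] by (auto simp: critical_cone_def)
  from False have "\<bar>u$i\<bar> = \<bar>s$i\<bar>" "\<bar>u$j\<bar> = \<bar>s$j\<bar>"
    using abs_eq_abs_target_if_mult_eq[of i j] abs_eq_abs_target_if_mult_eq[of j i] prod
    by (auto simp: mult.commute)
  with False ray[of i] ray[of j] show ?thesis
    using tight_pair_aligned_iff[OF prod] by (simp add: add_nonpos_nonpos mult_nonneg_nonpos)
qed

lemma dirderiv_obj_eq_0_iff_mem_critical_cone:
  assumes "u \<noteq> 0"
  shows "dirderiv (obj s) u w = 0 \<longleftrightarrow> w \<in> critical_cone s u"
  using dirderiv_obj_eq_0_iff aligned_imp_mem_critical_cone[OF assms]
    mem_critical_cone_imp_aligned by blast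

end

theorem proposition2:
  fixes ustar u :: "real^'n"
  assumes "ustar \<noteq> 0"
    and "u \<noteq> 0"
    and "spurious_stationary ustar u"
  shows "(\<forall>j. ustar$j \<noteq> 0 \<longrightarrow> \<bar>u$j\<bar> \<le> \<bar>ustar$j\<bar>)
       \<and> {w. dirderiv (obj ustar) u w = 0} =
         {w. \<forall>j. (ustar$j \<noteq> 0 \<and> \<bar>u$j\<bar> = \<bar>ustar$j\<bar> \<longrightarrow> w$j \<in> {sgn (u$j) * x | x. x \<le> 0})
               \<and> (ustar$j = 0 \<longrightarrow> w$j = 0)}
       \<and> {w. dirderiv (obj ustar) 0 w = 0} = UNIV"
proof -
  from \<open>spurious_stationary ustar u\<close> obtain Z where "stationarity_certificate ustar u Z"
      "u \<noteq> ustar" "u \<noteq> - ustar"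
    unfolding spurious_stationary_def by (auto elim: stationary_obtains_certificate)
  then interpret spurious_certificate ustar u Z
    by (simp add: spurious_certificate_def spurious_certificate_axioms_def)
  show ?thesis
    using abs_le_abs_target dirderiv_obj_eq_0_iff_mem_critical_cone[OF \<open>u \<noteq> 0\<close>]
      dirderiv_obj_at_0 by (auto simp: critical_cone_def)
qed

end
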